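(* Let $T_{n,j}$ denote the sum of the areas of all members of $I_{n,j}$. Then $$\sum_{n\ge1}\sum_{j=1}^n T_{n,j}\,y^j\frac{x^n}{n!}=\frac{y(1+y)}{2(1-y)^2}\ln\left(\frac{1-xy}{1-x}\right)+\frac{(4x^3y^2-8x^2y^2-4x^2y+5xy^2+8xy-x-6y+2)xy}{4(1-xy)^2(1-x)^2(1-y)}$$ $$=yx+y(3y+2)\frac{x^2}{2!}+y(11y^2+9y+7)\frac{x^3}{3!}+3y(17y^3+15y^2+13y+11)\frac{x^4}{4!}+\cdots.$$ In particular, for $n\ge1$ the sum of the areas of all members of $I_n$ is $\frac{n!}{2}\left(\binom{n+2}{2}-1\right)$.
   Context: An inversion sequence of length $n$ is a sequence $\rho=\rho_1\cdots\rho_n$ of integers with $1\le \rho_i\le i$ for all $i$. $I_n$ is the set of such sequences and $I_{n,j}$ the subset with last letter $j$. The area of $\rho$ (the area of its bargraph, whose $i$-th column has $\rho_i$ unit cells) is $\rho_1+\cdots+\rho_n$. *)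

theory Defs
  imports Complex_Main
begin

text \<open>Inversion sequences of length n, as lists r = [rho_1,...,rho_n] with
  1 \<le> rho_i \<le> i (list index i-1).\<close>
definition invseq :: "nat \<Rightarrow> nat list set" where
  "invseq n = {r. length r = n \<and> (\<forall>i<n. 1 \<le> r ! i \<and> r ! i \<le> i + 1)}"

definition invseq_last :: "nat \<Rightarrow> nat \<Rightarrow> nat list set" where
  "invseq_last n j = {r \<in> invseq n. r \<noteq> [] \<and> last r = j}"

definition area :: "nat list \<Rightarrow> nat" where
  "area r = sum_list r"

definition T :: "nat \<Rightarrow> nat \<Rightarrow> nat" where
  "T n j = (\<Sum>r\<in>invseq_last n j. area r)"

end

theory Submission
  imports Defs "HOL-Analysis.Analysis"
begin

text \<open>Appending a last letter j \<in> {1..m+1} to the members of I_m is a bijection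
  I_m \<times> {1..m+1} \<rightarrow> I_{m+1}. Hence |I_n| = n!, the total area A_m of I_m satisfies
  A_{m+1} = (m+1) A_m + m! (m+1)(m+2)/2, so A_m = m! m(m+3)/4, and T_{m+1,j} = A_m + j m!.
  Evaluating the arithmetic-geometric sum over j, the n-th term of the series becomes
  (a + a n + c/n) x^n - (5a + a n + c/n) (xy)^n with a = y/(4(1-y)) and c = y(1+y)/(2(1-y)^2),
  and the series of u^n, n u^n and u^n/n are u/(1-u), u/(1-u)^2 and -ln(1-u).\<close>

lemma invseq_0: "invseq 0 = {[]}"
  by (auto simp: invseq_def)

lemma invseq_Suc: "invseq (Suc m) = (\<lambda>(r, j). r @ [j]) ` (invseq m \<times> {1..Suc m})"
proof (intro set_eqI iffI)
  fix r assume r: "r \<in> invseq (Suc m)"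
  then have "length r = Suc m" by (simp add: invseq_def)
  then have "r \<noteq> []" by auto
  with \<open>length r = Suc m\<close> have last: "last r = r ! m" by (simp add: last_conv_nth)
  from \<open>r \<noteq> []\<close> have split: "r = butlast r @ [last r]" by simp
  have "butlast r \<in> invseq m" "last r \<in> {1..Suc m}"
    using r by (auto simp: invseq_def nth_butlast last)
  with split show "r \<in> (\<lambda>(r, j). r @ [j]) ` (invseq m \<times> {1..Suc m})"
    by (intro image_eqI[of _ _ "(butlast r, last r)"]) auto
next
  fix r assume "r \<in> (\<lambda>(r, j). r @ [j]) ` (invseq m \<times> {1..Suc m})"
  then show "r \<in> invseq (Suc m)"
    by (auto simp: invseq_def nth_append less_Suc_eq)
qed

lemma inj_on_snoc: "inj_on (\<lambda>(r, j). r @ [j]) X"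
  by (auto simp: inj_on_def)

lemma card_invseq: "card (invseq n) = fact n"
proof (induction n)
  case (Suc m)
  have "card (invseq (Suc m)) = card (invseq m \<times> {1..Suc m})"
    unfolding invseq_Suc by (rule card_image[OF inj_on_snoc])
  with Suc show ?case by (simp add: card_cartesian_product fact_Suc)
qed (simp add: invseq_0)

lemma sum_area_invseq_Suc:
  "(\<Sum>r\<in>invseq (Suc m). area r)
     = Suc m * (\<Sum>r\<in>invseq m. area r) + fact m * (\<Sum>j=1..Suc m. j)"
proof -
  have "(\<Sum>r\<in>invseq (Suc m). area r) = (\<Sum>(r, j)\<in>invseq m \<times> {1..Suc m}. area (r @ [j]))"
    unfolding invseq_Suc sum.reindex[OF inj_on_snoc] comp_def by (simp add: case_prod_beta')
  also have "\<dots> = (\<Sum>r\<in>invseq m. \<Sum>j=1..Suc m. area r + j)"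
    by (simp add: sum.cartesian_product[symmetric] area_def)
  also have "\<dots> = Suc m * (\<Sum>r\<in>invseq m. area r) + fact m * (\<Sum>j=1..Suc m. j)"
    by (simp del: sum.cl_ivl_Suc add: sum.distrib sum_distrib_left card_invseq)
  finally show ?thesis .
qed

lemma sum_area_invseq: "(\<Sum>r\<in>invseq n. real (area r)) = fact n * n * (n + 3) / 4"
proof (induction n)
  case (Suc m)
  have gauss: "(\<Sum>j=1..Suc m. real j) = (m + 1) * (m + 2) / 2"
    using double_gauss_sum_from_Suc_0[of "Suc m", where 'a = real]
    by (simp del: sum.cl_ivl_Suc add: algebra_simps)
  have "(\<Sum>r\<in>invseq (Suc m). real (area r))
      = (m + 1) * (\<Sum>r\<in>invseq m. real (area r)) + fact m * (\<Sum>j=1..Suc m. real j)"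
    using arg_cong[OF sum_area_invseq_Suc, of real] by (simp del: sum.cl_ivl_Suc add: algebra_simps)
  then show ?case
    unfolding Suc.IH gauss by (simp add: fact_Suc field_simps)
qed (simp add: invseq_0 area_def)

lemma invseq_last_Suc:
  "j \<in> {1..Suc m} \<Longrightarrow> invseq_last (Suc m) j = (\<lambda>r. r @ [j]) ` invseq m"
  unfolding invseq_last_def invseq_Suc by auto

lemma T_Suc: "j \<in> {1..Suc m} \<Longrightarrow> T (Suc m) j = (\<Sum>r\<in>invseq m. area r) + j * fact m"
  by (simp add: T_def invseq_last_Suc sum.reindex inj_on_def area_def sum.distrib card_invseq)

lemma of_nat_T_Suc:
  "j \<in> {1..Suc m} \<Longrightarrow> real (T (Suc m) j) = fact m * (real m * (real m + 3) / 4 + real j)"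
  by (simp add: T_Suc sum_area_invseq algebra_simps)

lemma T_polynomial_Suc:
  "(\<Sum>j=1..Suc m. real (T (Suc m) j) * y ^ j)
     = fact m * (\<Sum>j=1..Suc m. (real m * (real m + 3) / 4 + real j) * y ^ j)"
  unfolding sum_distrib_left by (rule sum.cong) (simp_all add: of_nat_T_Suc)

lemma sum_index_powers:
  fixes y :: "'a :: comm_ring_1"
  shows "(1 - y)^2 * (\<Sum>j=1..n. of_nat j * y ^ j) = y - (of_nat n + 1) * y ^ Suc n + of_nat n * y ^ Suc (Suc n)"
  by (induction n) (simp_all add: algebra_simps power2_eq_square)

lemma sum_affine_times_powers:
  fixes y c :: "'a :: field"
  assumes "y \<noteq> 1"
  shows "(\<Sum>j=1..n. (c + of_nat j) * y ^ j)
    = (c * (1 - y) * (y - y ^ Suc n) + y - (of_nat n + 1) * y ^ Suc n + of_nat n * y ^ Suc (Suc n))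
      / (1 - y)^2"
proof -
  have geometric: "(1 - y) * (\<Sum>j=1..n. y ^ j) = y - y ^ Suc n"
    using sum_gp_multiplied[of 1 n y] by (cases "n = 0") simp_all
  have "(1 - y)^2 * (\<Sum>j=1..n. (c + of_nat j) * y ^ j)
      = c * (1 - y) * ((1 - y) * (\<Sum>j=1..n. y ^ j)) + (1 - y)^2 * (\<Sum>j=1..n. of_nat j * y ^ j)"
    by (simp add: distrib_right sum.distrib sum_distrib_left algebra_simps power2_eq_square)
  also have "\<dots> = c * (1 - y) * (y - y ^ Suc n) + y - (of_nat n + 1) * y ^ Suc n + of_nat n * y ^ Suc (Suc n)"
    unfolding geometric sum_index_powers by (simp add: algebra_simps)
  finally show ?thesis
    using assms by (simp add: eq_divide_eq mult.commute)
qed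

lemma series_term_decomposition:
  fixes x y :: real
  assumes "y \<noteq> 1"
  defines "a \<equiv> y / (4 * (1 - y))" and "c \<equiv> y * (1 + y) / (2 * (1 - y)^2)"
  shows "(\<Sum>j=1..Suc m. real (T (Suc m) j) * y ^ j * x ^ Suc m / fact (Suc m))
    = (a + a * Suc m + c / Suc m) * x ^ Suc m
      - (5 * a + a * Suc m + c / Suc m) * (x * y) ^ Suc m"
proof -
  define N where "N = real (Suc m)"
  define S where "S = (\<Sum>j=1..Suc m. (real m * (real m + 3) / 4 + real j) * y ^ j)"
  have "(\<Sum>j=1..Suc m. real (T (Suc m) j) * y ^ j * x ^ Suc m / fact (Suc m))
      = (\<Sum>j=1..Suc m. real (T (Suc m) j) * y ^ j) * x ^ Suc m / fact (Suc m)"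
    by (simp only: sum_distrib_right sum_divide_distrib)
  also have "\<dots> = x ^ Suc m / N * S"
    unfolding T_polynomial_Suc S_def[symmetric] by (simp add: N_def fact_Suc)
  also have "S = (real m * (real m + 3) / 4 * (1 - y) * (y - y ^ Suc (Suc m))
      + y - (N + 1) * y ^ Suc (Suc m) + N * y ^ Suc (Suc (Suc m))) / (1 - y)^2"
    unfolding S_def sum_affine_times_powers[OF assms(1)] by (simp add: N_def)
  also have "x ^ Suc m / N * \<dots>
      = (a + a * N + c / N) * x ^ Suc m - (5 * a + a * N + c / N) * (x * y) ^ Suc m"
  proof -
    obtain p q where p: "x ^ Suc m = p" and q: "y ^ Suc m = q" by blast
    have powers: "(x * y) ^ Suc m = p * q" "y ^ Suc (Suc m) = y * q" "y ^ Suc (Suc (Suc m)) = y^2 * q"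
      unfolding p[symmetric] q[symmetric] by (simp_all add: power_mult_distrib power2_eq_square)
    \<comment> \<open>in terms of d = 1 - y the denominators are monomials, which field_simps can clear\<close>
    define d where "d = 1 - y"
    have y: "y = 1 - d" and "d \<noteq> 0" using assms(1) by (simp_all add: d_def)
    moreover have m: "real m = N - 1" and "N \<noteq> 0" by (simp_all add: N_def)
    ultimately show ?thesis
      unfolding a_def c_def p powers unfolding y m by (simp add: field_simps power2_eq_square)
  qed
  finally show ?thesis by (simp add: N_def)
qed

lemma sums_power_affine_harmonic:
  fixes u a b c :: real
  assumes "\<bar>u\<bar> < 1"
  shows "(\<lambda>m. (a + b * Suc m + c / Suc m) * u ^ Suc m)
    sums (a * (u / (1 - u)) + b * (u / (1 - u)^2) - c * ln (1 - u))"
proof -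
  have "(\<lambda>m. u ^ Suc m) sums (u / (1 - u))"
    using sums_mult[OF geometric_sums[OF assms[folded real_norm_def]], of u] by simp
  moreover have "(\<lambda>m. Suc m * u ^ Suc m) sums (u / (1 - u)^2)"
    using sums_mult[OF geometric_deriv_sums[OF assms[folded real_norm_def]], of u]
    by (simp add: algebra_simps)
  moreover have "(\<lambda>m. u ^ Suc m / Suc m) sums (- ln (1 - u))"
  proof -
    have "(\<lambda>n. - ((- (- u)) ^ n) / real n) sums ln (1 + (- u))"
      using assms by (intro ln_series') simp
    then have "(\<lambda>n. u ^ n / real n) sums (- ln (1 - u))"
      using sums_minus by fastforce
    then show ?thesis by (subst sums_Suc_iff) simp
  qed
  ultimately have "(\<lambda>m. a * u ^ Suc m + b * (Suc m * u ^ Suc m) + c * (u ^ Suc m / Suc m))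
      sums (a * (u / (1 - u)) + b * (u / (1 - u)^2) + c * (- ln (1 - u)))"
    by (intro sums_add sums_mult)
  then show ?thesis by (simp add: algebra_simps)
qed

lemma generating_function_rational_part:
  fixes x y :: real
  assumes "x \<noteq> 1" "x * y \<noteq> 1" "y \<noteq> 1"
  defines "a \<equiv> y / (4 * (1 - y))"
  shows "a * (x / (1 - x)) + a * (x / (1 - x)^2) - (5 * a * (x * y / (1 - x * y)) + a * (x * y / (1 - x * y)^2))
    = (4*x^3*y^2 - 8*x^2*y^2 - 4*x^2*y + 5*x*y^2 + 8*x*y - x - 6*y + 2) * x * y
      / (4 * (1 - x*y)^2 * (1 - x)^2 * (1 - y))"
proof -
  have "1 - x \<noteq> 0" "1 - x * y \<noteq> 0" "1 - y \<noteq> 0" using assms by auto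
  then show ?thesis
    unfolding a_def by (simp add: divide_simps) (simp add: algebra_simps power2_eq_square power3_eq_cube)
qed

lemma sums_area_generating_function:
  fixes x y :: real
  assumes x: "\<bar>x\<bar> < 1" and y: "\<bar>y\<bar> < 1"
  shows "(\<lambda>n. \<Sum>j=1..n. real (T n j) * y ^ j * x ^ n / fact n) sums
    (y * (1 + y) / (2 * (1 - y)^2) * ln ((1 - x * y) / (1 - x))
     + (4*x^3*y^2 - 8*x^2*y^2 - 4*x^2*y + 5*x*y^2 + 8*x*y - x - 6*y + 2) * x * y
       / (4 * (1 - x*y)^2 * (1 - x)^2 * (1 - y)))"
    (is "_ sums (?c * ln ((1 - x * y) / (1 - x)) + ?rational)")
proof -
  define a where "a = y / (4 * (1 - y))"
  define c where "c = ?c"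
  have xy: "\<bar>x * y\<bar> < 1"
    using abs_mult_less[OF x y] by (simp add: abs_mult)
  have series_term: "(\<Sum>j=1..Suc m. real (T (Suc m) j) * y ^ j * x ^ Suc m / fact (Suc m))
      = (a + a * Suc m + c / Suc m) * x ^ Suc m - (5 * a + a * Suc m + c / Suc m) * (x * y) ^ Suc m"
    for m
    unfolding a_def c_def using y by (intro series_term_decomposition) auto
  have "(\<lambda>m. (a + a * Suc m + c / Suc m) * x ^ Suc m - (5 * a + a * Suc m + c / Suc m) * (x * y) ^ Suc m)
      sums ((a * (x / (1 - x)) + a * (x / (1 - x)^2) - c * ln (1 - x))
        - (5 * a * (x * y / (1 - x * y)) + a * (x * y / (1 - x * y)^2) - c * ln (1 - x * y)))"
    by (intro sums_diff sums_power_affine_harmonic x xy)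
  also have "\<dots> = c * ln ((1 - x * y) / (1 - x)) + ?rational"
  proof -
    have rational: "a * (x / (1 - x)) + a * (x / (1 - x)^2)
        - (5 * a * (x * y / (1 - x * y)) + a * (x * y / (1 - x * y)^2)) = ?rational"
      unfolding a_def using x y xy by (intro generating_function_rational_part) auto
    have ln: "ln ((1 - x * y) / (1 - x)) = ln (1 - x * y) - ln (1 - x)"
      using x xy by (intro ln_divide_pos) auto
    show ?thesis
      unfolding ln rational[symmetric] by (simp add: algebra_simps)
  qed
  finally have "(\<lambda>m. \<Sum>j=1..Suc m. real (T (Suc m) j) * y ^ j * x ^ Suc m / fact (Suc m))
      sums (c * ln ((1 - x * y) / (1 - x)) + ?rational)"
    by (simp only: series_term)
  then show ?thesis
    unfolding c_def by (subst (asm) sums_Suc_iff) simp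
qed

lemma sum_area_invseq_binomial:
  "real (\<Sum>r\<in>invseq n. area r) = fact n / 2 * (real ((n + 2) choose 2) - 1)"
proof -
  have binomial: "real ((n + 2) choose 2) = (real n + 2) * (real n + 1) / 2"
    by (simp add: choose_two real_of_nat_div field_simps)
  show ?thesis
    unfolding of_nat_sum sum_area_invseq binomial by (simp add: field_simps)
qed

theorem corollary2p3:
  shows "(\<forall>x y :: real. \<bar>x\<bar> < 1 \<longrightarrow> \<bar>y\<bar> < 1 \<longrightarrow>
           (\<lambda>n. \<Sum>j=1..n. real (T n j) * y ^ j * x ^ n / fact n) sums
             (y * (1 + y) / (2 * (1 - y)^2) * ln ((1 - x * y) / (1 - x))
              + (4*x^3*y^2 - 8*x^2*y^2 - 4*x^2*y + 5*x*y^2 + 8*x*y - x - 6*y + 2) * x * y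
                / (4 * (1 - x*y)^2 * (1 - x)^2 * (1 - y))))
      \<and> (\<forall>y :: real. (\<Sum>j=1..1. real (T 1 j) * y ^ j) = y)
      \<and> (\<forall>y :: real. (\<Sum>j=1..2. real (T 2 j) * y ^ j) = y * (3*y + 2))
      \<and> (\<forall>y :: real. (\<Sum>j=1..3. real (T 3 j) * y ^ j) = y * (11*y^2 + 9*y + 7))
      \<and> (\<forall>y :: real. (\<Sum>j=1..4. real (T 4 j) * y ^ j) = 3 * y * (17*y^3 + 15*y^2 + 13*y + 11))
      \<and> (\<forall>n::nat. n \<ge> 1 \<longrightarrow>
           real (\<Sum>r\<in>invseq n. area r) = fact n / 2 * (real ((n + 2) choose 2) - 1))"
proof (intro conjI allI impI)
  fix y :: real
  show "(\<Sum>j=1..1. real (T 1 j) * y ^ j) = y"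
    using T_polynomial_Suc[of 0 y] by simp
  show "(\<Sum>j=1..2. real (T 2 j) * y ^ j) = y * (3*y + 2)"
    using T_polynomial_Suc[of 1 y] by (simp add: numeral_eq_Suc algebra_simps)
  show "(\<Sum>j=1..3. real (T 3 j) * y ^ j) = y * (11*y^2 + 9*y + 7)"
    using T_polynomial_Suc[of 2 y] by (simp add: numeral_eq_Suc algebra_simps)
  show "(\<Sum>j=1..4. real (T 4 j) * y ^ j) = 3 * y * (17*y^3 + 15*y^2 + 13*y + 11)"
    using T_polynomial_Suc[of 3 y] by (simp add: numeral_eq_Suc algebra_simps)
qed (rule sums_area_generating_function sum_area_invseq_binomial; assumption)+

end
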